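(* Let $i,j\in I$, $c_1:=-\langle h_i,\alpha_j\rangle$, $c_2:=-\langle h_j,\alpha_i\rangle$, and suppose $c_1c_2=2$. Define $\phi^{(2)}_{ij}:B_i\otimes B_j\otimes B_i\otimes B_j\to B_j\otimes B_i\otimes B_j\otimes B_i$ by $\phi^{(2)}_{ij}((x)_i\otimes(y)_j\otimes(z)_i\otimes(w)_j)=(X)_j\otimes(Y)_i\otimes(Z)_j\otimes(W)_i$, where $$X=w+(-c_2x+y-w+c_2(x-c_1y+z)_+)_+,\qquad Y=x+c_1w+(-x+z-c_1w+(x-c_1y+z)_+)_+,$$ $$Z=y-(-c_2x+y-w+c_2(x-c_1y+z)_+)_+,\qquad W=z-c_1w-(-x+z-c_1w+(x-c_1y+z)_+)_+.$$ Then $\phi^{(2)}_{ij}$ is an isomorphism of crystals.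
   Context: Let $\mathfrak g$ be a symmetrizable Kac–Moody algebra with finite index set $I$, weight lattice $P$, simple roots $\alpha_i$ and simple coroots $h_i$ ($i\in I$), with pairing $\langle\cdot,\cdot\rangle$. A crystal is a set $B$ with maps $wt:B\to P$, $\varepsilon_i,\varphi_i:B\to\mathbb Z\sqcup\{-\infty\}$, $\tilde e_i,\tilde f_i:B\sqcup\{0\}\to B\sqcup\{0\}$ ($i\in I$) such that $\varphi_i(b)=\varepsilon_i(b)+\langle h_i,wt(b)\rangle$; $wt(\tilde e_ib)=wt(b)+\alpha_i$ if $\tilde e_ib\in B$; $wt(\tilde f_ib)=wt(b)-\alpha_i$ if $\tilde f_ib\in B$; $\tilde e_ib_2=b_1\iff\tilde f_ib_1=b_2$; $\varepsilon_i(b)=-\infty$ implies $\tilde e_ib=\tilde f_ib=0$; $\tilde e_i0=\tilde f_i0=0$. A strict morphism $\psi:B_1\to B_2$ is a map $B_1\sqcup\{0\}\to B_2\sqcup\{0\}$ with $\psi(0)=0$, preserving $wt,\varepsilon_i,\varphi_i$ on elements $b$ with $\psi(b)\neq0$, and commuting with all $\tilde e_i,\tilde f_i$; an isomorphism of crystals is a bijective strict morphism. The tensor product $B_1\otimes B_2=\{b_1\otimes b_2\}$ has $wt(b_1\otimes b_2)=wt(b_1)+wt(b_2)$, $\varepsilon_i(b_1\otimes b_2)=\max(\varepsilon_i(b_1),\varepsilon_i(b_2)-\langle h_i,wt(b_1)\rangle)$, $\varphi_i(b_1\otimes b_2)=\max(\varphi_i(b_2),\varphi_i(b_1)+\langle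 h_i,wt(b_2)\rangle)$, $\tilde e_i(b_1\otimes b_2)=\tilde e_ib_1\otimes b_2$ if $\varphi_i(b_1)\ge\varepsilon_i(b_2)$ and $b_1\otimes\tilde e_ib_2$ otherwise, $\tilde f_i(b_1\otimes b_2)=\tilde f_ib_1\otimes b_2$ if $\varphi_i(b_1)>\varepsilon_i(b_2)$ and $b_1\otimes\tilde f_ib_2$ otherwise (with $b\otimes0=0\otimes b=0$); it is associative. For $i\in I$, $B_i=\{(x)_i: x\in\mathbb Z\}$ is the crystal with $wt((x)_i)=x\alpha_i$, $\varepsilon_i((x)_i)=-x$, $\varphi_i((x)_i)=x$, $\varepsilon_j((x)_i)=\varphi_j((x)_i)=-\infty$ for $j\ne i$, $\tilde e_j(x)_i=\delta_{ij}(x+1)_i$, $\tilde f_j(x)_i=\delta_{ij}(x-1)_i$ (where $\delta_{ij}\cdot(\ )=0$ for $j\neq i$). For $x\in\mathbb Q$, $x_+:=\max(x,0)$. *)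

theory Defs
  imports Complex_Main "HOL-Library.Extended_Real"
begin

text \<open>Kac-Moody datum: index set I (finite), generalized Cartan matrix A with
  A k l = <h_k, alpha_l>, simple roots alpha in the real vector space 'w (dual
  Cartan subalgebra), coroots given by the linear functionals hpair k.\<close>

definition km_datum ::
  "'i set \<Rightarrow> ('i \<Rightarrow> 'i \<Rightarrow> int) \<Rightarrow> ('i \<Rightarrow> 'w::real_vector) \<Rightarrow> ('i \<Rightarrow> 'w \<Rightarrow> real) \<Rightarrow> bool" where
  "km_datum I A alpha hpair \<longleftrightarrow>
     finite I
   \<and> (\<forall>k\<in>I. A k k = 2)
   \<and> (\<forall>k\<in>I. \<forall>l\<in>I. k \<noteq> l \<longrightarrow> A k l \<le> 0)
   \<and> (\<forall>k\<in>I. \<forall>l\<in>I. A k l = 0 \<longleftrightarrow> A l k = 0)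
   \<and> (\<exists>d::'i \<Rightarrow> real. (\<forall>k\<in>I. d k > 0) \<and> (\<forall>k\<in>I. \<forall>l\<in>I. d k * A k l = d l * A l k))
   \<and> (\<forall>k\<in>I. linear (hpair k))
   \<and> (\<forall>k\<in>I. \<forall>l\<in>I. hpair k (alpha l) = of_int (A k l))
   \<and> (\<forall>c::'i \<Rightarrow> real. (\<Sum>k\<in>I. c k *\<^sub>R alpha k) = 0 \<longrightarrow> (\<forall>k\<in>I. c k = 0))"

text \<open>A crystal structure on the type 'b. The values of eps/phi lie in
  Z with -infinity (as ereal); e and f return None for the element 0.\<close>

record ('b, 'w, 'i) crystal =
  cwt  :: "'b \<Rightarrow> 'w"
  ceps :: "'i \<Rightarrow> 'b \<Rightarrow> ereal"
  cphi :: "'i \<Rightarrow> 'b \<Rightarrow> ereal"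
  ce   :: "'i \<Rightarrow> 'b \<Rightarrow> 'b option"
  cf   :: "'i \<Rightarrow> 'b \<Rightarrow> 'b option"

definition tensor ::
  "('i \<Rightarrow> 'w::real_vector \<Rightarrow> real) \<Rightarrow> ('b1, 'w, 'i) crystal \<Rightarrow> ('b2, 'w, 'i) crystal
     \<Rightarrow> ('b1 \<times> 'b2, 'w, 'i) crystal" where
  "tensor hpair C1 C2 =
    \<lparr> cwt = (\<lambda>(b1, b2). cwt C1 b1 + cwt C2 b2),
      ceps = (\<lambda>k (b1, b2). max (ceps C1 k b1) (ceps C2 k b2 - ereal (hpair k (cwt C1 b1)))),
      cphi = (\<lambda>k (b1, b2). max (cphi C2 k b2) (cphi C1 k b1 + ereal (hpair k (cwt C2 b2)))),
      ce = (\<lambda>k (b1, b2). if cphi C1 k b1 \<ge> ceps C2 k b2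
                         then map_option (\<lambda>b. (b, b2)) (ce C1 k b1)
                         else map_option (\<lambda>b. (b1, b)) (ce C2 k b2)),
      cf = (\<lambda>k (b1, b2). if cphi C1 k b1 > ceps C2 k b2
                         then map_option (\<lambda>b. (b, b2)) (cf C1 k b1)
                         else map_option (\<lambda>b. (b1, b)) (cf C2 k b2)) \<rparr>"

text \<open>The crystal B_i; the element (x)_i is represented by the integer x.\<close>

definition Bcr :: "('i \<Rightarrow> 'w::real_vector) \<Rightarrow> 'i \<Rightarrow> (int, 'w, 'i) crystal" where
  "Bcr alpha i =
    \<lparr> cwt = (\<lambda>x. of_int x *\<^sub>R alpha i),
      ceps = (\<lambda>k x. if k = i then ereal (of_int (- x)) else - \<infinity>),
      cphi = (\<lambda>k x. if k = i then ereal (of_int x) else - \<infinity>),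
      ce = (\<lambda>k x. if k = i then Some (x + 1) else None),
      cf = (\<lambda>k x. if k = i then Some (x - 1) else None) \<rparr>"

text \<open>Strict morphisms B1 -> B2: psi b = None means psi(b) = 0; psi(0) = 0 is built in.\<close>

definition strict_morphism ::
  "'i set \<Rightarrow> ('b1, 'w, 'i) crystal \<Rightarrow> ('b2, 'w, 'i) crystal \<Rightarrow> ('b1 \<Rightarrow> 'b2 option) \<Rightarrow> bool" where
  "strict_morphism I C1 C2 psi \<longleftrightarrow>
     (\<forall>b b'. psi b = Some b' \<longrightarrow>
        cwt C2 b' = cwt C1 b \<and>
        (\<forall>k\<in>I. ceps C2 k b' = ceps C1 k b \<and> cphi C2 k b' = cphi C1 k b))
   \<and> (\<forall>k\<in>I. \<forall>b. Option.bind (ce C1 k b) psi = Option.bind (psi b) (ce C2 k)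
              \<and> Option.bind (cf C1 k b) psi = Option.bind (psi b) (cf C2 k))"

definition crystal_iso ::
  "'i set \<Rightarrow> ('b1, 'w, 'i) crystal \<Rightarrow> ('b2, 'w, 'i) crystal \<Rightarrow> ('b1 \<Rightarrow> 'b2 option) \<Rightarrow> bool" where
  "crystal_iso I C1 C2 psi \<longleftrightarrow>
     strict_morphism I C1 C2 psi \<and> bij (\<lambda>x. case x of None \<Rightarrow> None | Some b \<Rightarrow> psi b)"

definition pos_part :: "int \<Rightarrow> int" where
  "pos_part x = max x 0"

text \<open>The map phi^(2)_ij on ((B_i (x) B_j) (x) B_i) (x) B_j (tensor is associative).\<close>

definition phi2 :: "int \<Rightarrow> int \<Rightarrow> ((int \<times> int) \<times> int) \<times> int \<Rightarrow> ((int \<times> int) \<times> int) \<times> int" where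
  "phi2 c1 c2 = (\<lambda>(((x, y), z), w).
     let X = w + pos_part (- c2 * x + y - w + c2 * pos_part (x - c1 * y + z));
         Y = x + c1 * w + pos_part (- x + z - c1 * w + pos_part (x - c1 * y + z));
         Z = y - pos_part (- c2 * x + y - w + c2 * pos_part (x - c1 * y + z));
         W = z - c1 * w - pos_part (- x + z - c1 * w + pos_part (x - c1 * y + z))
     in (((X, Y), Z), W))"

end

theory Submission
  imports Defs
begin

(* Both sides are fourfold tensor products of the rank-one crystals B_i, B_j, so by the
   tensor product rule their crystal data are explicit piecewise-linear functions of
   (x, y, z, w): for instance e_i acts on the first B_i factor iff x - c1 y + z >= 0.
   The map phi2 c1 c2 has inverse phi2 c2 c1, preserves the weight and phi_i, phi_j, and
   commutes with e_i, e_j; for c1 c2 = 2 these are finitely many piecewise-linear identities,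
   checked separately for (c1, c2) = (1, 2) and (2, 1). Compatibility with eps then follows
   from phi = eps + <h, wt>, and with f from f = e^-1, both of which hold in the tensor
   products. *)

definition phi_eq_eps_plus_wt :: "('i \<Rightarrow> 'w \<Rightarrow> real) \<Rightarrow> 'i set \<Rightarrow> ('b, 'w, 'i) crystal \<Rightarrow> bool" where
  "phi_eq_eps_plus_wt hpair I C \<longleftrightarrow>
     (\<forall>k\<in>I. \<forall>b. cphi C k b = ceps C k b + ereal (hpair k (cwt C b)))"

definition e_f_inverse :: "'i set \<Rightarrow> ('b, 'w, 'i) crystal \<Rightarrow> bool" where
  "e_f_inverse I C \<longleftrightarrow> (\<forall>k\<in>I. \<forall>b b'. ce C k b = Some b' \<longleftrightarrow> cf C k b' = Some b)"

lemma phi_eq_eps_plus_wt_Bcr: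
  assumes "linear (hpair i)" and "hpair i (alpha i) = 2"
  shows "phi_eq_eps_plus_wt hpair I (Bcr alpha i)"
  using assms by (simp add: phi_eq_eps_plus_wt_def Bcr_def linear_scale)

lemma phi_eq_eps_plus_wt_tensor:
  assumes lin: "\<forall>k\<in>I. linear (hpair k)"
    and C1: "phi_eq_eps_plus_wt hpair I C1" and C2: "phi_eq_eps_plus_wt hpair I C2"
  shows "phi_eq_eps_plus_wt hpair I (tensor hpair C1 C2)"
proof -
  have "cphi (tensor hpair C1 C2) k (b1, b2) =
      ceps (tensor hpair C1 C2) k (b1, b2) + ereal (hpair k (cwt (tensor hpair C1 C2) (b1, b2)))"
    if k: "k \<in> I" for k b1 b2
  proof -
    let ?h1 = "ereal (hpair k (cwt C1 b1))" and ?h2 = "ereal (hpair k (cwt C2 b2))"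
    have phi1: "cphi C1 k b1 = ceps C1 k b1 + ?h1" and phi2: "cphi C2 k b2 = ceps C2 k b2 + ?h2"
      using C1 C2 k by (auto simp: phi_eq_eps_plus_wt_def)
    have h: "hpair k (cwt C1 b1 + cwt C2 b2) = hpair k (cwt C1 b1) + hpair k (cwt C2 b2)"
      using lin k by (simp add: linear_add)
    have "max (ceps C1 k b1) (ceps C2 k b2 - ?h1) + (?h1 + ?h2)
        = max (ceps C1 k b1 + ?h1 + ?h2) (ceps C2 k b2 + ?h2)"
      by (cases "ceps C1 k b1"; cases "ceps C2 k b2") (simp_all add: max_def)
    then show ?thesis
      by (simp add: tensor_def h phi1 phi2 max.commute)
  qed
  then show ?thesis
    by (auto simp: phi_eq_eps_plus_wt_def)
qed

lemma ceps_eq_of_cphi_eq: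
  assumes "phi_eq_eps_plus_wt hpair I C1" and "phi_eq_eps_plus_wt hpair I C2" and "k \<in> I"
    and "cwt C2 b' = cwt C1 b" and "cphi C2 k b' = cphi C1 k b"
  shows "ceps C2 k b' = ceps C1 k b"
  using assms ereal_add_cancel_right[of "ereal (hpair k (cwt C1 b))"]
  by (simp add: phi_eq_eps_plus_wt_def)

lemma cf_commute_of_ce_commute:
  assumes g: "bij g" and C1: "e_f_inverse I C1" and C2: "e_f_inverse I C2" and k: "k \<in> I"
    and e: "\<And>b. ce C2 k (g b) = map_option g (ce C1 k b)"
  shows "cf C2 k (g b) = map_option g (cf C1 k b)"
proof (cases "cf C1 k b")
  case None
  show ?thesis
  proof (rule ccontr)
    assume "cf C2 k (g b) \<noteq> map_option g (cf C1 k b)"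
    then obtain c where "cf C2 k (g b) = Some (g c)"
      using None g by (metis bij_pointE option.simps(8) not_None_eq)
    then have "ce C2 k (g c) = Some (g b)"
      using C2 k by (simp add: e_f_inverse_def)
    then have "map_option g (ce C1 k c) = Some (g b)"
      by (simp add: e)
    then have "ce C1 k c = Some b"
      using bij_is_inj[OF g] by (auto dest: injD)
    then show False
      using C1 k None by (simp add: e_f_inverse_def)
  qed
next
  case (Some b')
  then have "ce C1 k b' = Some b"
    using C1 k by (simp add: e_f_inverse_def)
  then have "ce C2 k (g b') = Some (g b)"
    by (simp add: e)
  then show ?thesis
    using C2 k Some by (simp add: e_f_inverse_def)
qed

lemma crystal_iso_of_bij:
  assumes g: "bij g"
    and phi_eps: "phi_eq_eps_plus_wt hpair I C1" "phi_eq_eps_plus_wt hpair I C2"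
    and e_f: "e_f_inverse I C1" "e_f_inverse I C2"
    and wt: "\<And>b. cwt C2 (g b) = cwt C1 b"
    and phi: "\<And>k b. k \<in> I \<Longrightarrow> cphi C2 k (g b) = cphi C1 k b"
    and e: "\<And>k b. k \<in> I \<Longrightarrow> ce C2 k (g b) = map_option g (ce C1 k b)"
  shows "crystal_iso I C1 C2 (\<lambda>b. Some (g b))"
proof -
  have eps: "ceps C2 k (g b) = ceps C1 k b" if "k \<in> I" for k b
    using ceps_eq_of_cphi_eq[OF phi_eps that wt phi[OF that]] .
  have f: "cf C2 k (g b) = map_option g (cf C1 k b)" if "k \<in> I" for k b
    using cf_commute_of_ce_commute[OF g e_f that e[OF that]] .
  have "bij (map_option g)"
    by (rule o_bij[of "map_option (inv g)"])
      (simp_all add: fun_eq_iff option.map_comp bij_is_inj[OF g]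
        surj_iff[THEN iffD1, OF bij_is_surj[OF g]] option.map_id)
  then have "bij (\<lambda>x. case x of None \<Rightarrow> None | Some b \<Rightarrow> Some (g b))"
    by (simp add: map_option_case[abs_def])
  then show ?thesis
    by (auto simp: crystal_iso_def strict_morphism_def wt phi eps e f
        map_conv_bind_option[symmetric, unfolded comp_def])
qed

lemma phi2_involutive:
  assumes "(c1, c2) \<in> {(1, 2), (2, 1)}"
  shows "phi2 c2 c1 (phi2 c1 c2 v) = v"
  using assms by (cases v) (auto simp: phi2_def pos_part_def Let_def max_def)

lemma phi2_weight:
  assumes "phi2 c1 c2 (((x, y), z), w) = (((X, Y), Z), W)"
  shows "X + Z = y + w" and "Y + W = x + z"
  using assms by (auto simp: phi2_def Let_def)

(* Here c1 c2 = 2 is essential: these identities, and phi2_involutive, already fail for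
   (c1, c2) = (1, 1), (2, 2) or (1, 3). *)

lemma phi2_phi:
  assumes "(c1, c2) \<in> {(1, 2), (2, 1)}"
    and "phi2 c1 c2 (((x, y), z), w) = (((X, Y), Z), W)"
  shows "max W (Y - c1 * Z + 2 * W) = max z (x - c1 * y + 2 * z) - c1 * w"
    and "max Z (X - c2 * Y + 2 * Z) - c2 * W = max w (y - c2 * z + 2 * w)"
  using assms unfolding phi2_def Let_def pos_part_def
  by (elim insertE emptyE; simp; smt (z3))+

lemma phi2_e:
  assumes "(c1, c2) \<in> {(1, 2), (2, 1)}"
    and "phi2 c1 c2 (((x, y), z), w) = (((X, Y), Z), W)"
  shows "phi2 c1 c2 (if x - c1 * y + z \<ge> 0 then (((x + 1, y), z), w) else (((x, y), z + 1), w)) =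
      (if Y - c1 * Z + W \<ge> 0 then (((X, Y + 1), Z), W) else (((X, Y), Z), W + 1))"
    and "phi2 c1 c2 (if y - c2 * z + w \<ge> 0 then (((x, y + 1), z), w) else (((x, y), z), w + 1)) =
      (if X - c2 * Y + Z \<ge> 0 then (((X + 1, Y), Z), W) else (((X, Y), Z + 1), W))"
  using assms unfolding if_distrib[of "phi2 c1 c2"] unfolding phi2_def Let_def pos_part_def
  by (elim insertE emptyE; simp; smt (z3))+

lemma numeral_mult_of_int: "numeral k * (of_int u :: 'a::ring_1) = of_int (numeral k * u)"
  by simp

abbreviation B_alt4 ::
  "('i \<Rightarrow> 'w::real_vector \<Rightarrow> real) \<Rightarrow> ('i \<Rightarrow> 'w) \<Rightarrow> 'i \<Rightarrow> 'i
     \<Rightarrow> (((int \<times> int) \<times> int) \<times> int, 'w, 'i) crystal" where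
  "B_alt4 hpair alpha p q \<equiv>
     tensor hpair (tensor hpair (tensor hpair (Bcr alpha p) (Bcr alpha q)) (Bcr alpha p)) (Bcr alpha q)"

locale rank2_pair =
  fixes hpair :: "'i \<Rightarrow> 'w::real_vector \<Rightarrow> real" and alpha :: "'i \<Rightarrow> 'w"
    and p q :: 'i and c d :: int
  assumes p_ne_q: "p \<noteq> q"
    and linear_p: "linear (hpair p)" and linear_q: "linear (hpair q)"
    and pp: "hpair p (alpha p) = 2" and pq: "hpair p (alpha q) = - of_int c"
    and qp: "hpair q (alpha p) = - of_int d" and qq: "hpair q (alpha q) = 2"
begin

(* The flipped of_int rules below gather the real arithmetic of the tensor rule under of_int,
   so that its comparisons become integer ones. *)
lemmas B_alt4_simps = tensor_def Bcr_def p_ne_q p_ne_q[symmetric] pp pq qp qq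
  linear_add[OF linear_p] linear_scale[OF linear_p] linear_add[OF linear_q] linear_scale[OF linear_q]

lemma cwt_B_alt4:
  "cwt (B_alt4 hpair alpha p q) (((x, y), z), w) =
     of_int (x + z) *\<^sub>R alpha p + of_int (y + w) *\<^sub>R alpha q"
  by (simp add: tensor_def Bcr_def algebra_simps)

lemma cphi_B_alt4:
  "cphi (B_alt4 hpair alpha p q) p (((x, y), z), w) = of_int (max z (x - c * y + 2 * z) - c * w)"
  "cphi (B_alt4 hpair alpha p q) q (((x, y), z), w) = of_int (max w (y - d * z + 2 * w))"
  by (simp_all add: B_alt4_simps max_def algebra_simps numeral_mult_of_int
      flip: of_int_add of_int_mult of_int_diff of_int_minus)

lemma ce_B_alt4:
  "ce (B_alt4 hpair alpha p q) p (((x, y), z), w) =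
     Some (if x - c * y + z \<ge> 0 then (((x + 1, y), z), w) else (((x, y), z + 1), w))"
  "ce (B_alt4 hpair alpha p q) q (((x, y), z), w) =
     Some (if y - d * z + w \<ge> 0 then (((x, y + 1), z), w) else (((x, y), z), w + 1))"
  by (simp_all add: B_alt4_simps algebra_simps numeral_mult_of_int
      flip: of_int_add of_int_mult of_int_diff of_int_minus)

lemma cf_B_alt4:
  "cf (B_alt4 hpair alpha p q) p (((x, y), z), w) =
     Some (if x - c * y + z > 0 then (((x - 1, y), z), w) else (((x, y), z - 1), w))"
  "cf (B_alt4 hpair alpha p q) q (((x, y), z), w) =
     Some (if y - d * z + w > 0 then (((x, y - 1), z), w) else (((x, y), z), w - 1))"
  by (simp_all add: B_alt4_simps algebra_simps numeral_mult_of_int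
      flip: of_int_add of_int_mult of_int_diff of_int_minus)
    (metis diff_add_cancel)

lemma B_alt4_other_index:
  assumes "k \<noteq> p" and "k \<noteq> q"
  shows "cphi (B_alt4 hpair alpha p q) k v = -\<infinity>"
    and "ce (B_alt4 hpair alpha p q) k v = None"
    and "cf (B_alt4 hpair alpha p q) k v = None"
  using assms by (simp_all add: tensor_def Bcr_def split: prod.splits)

lemma phi_eq_eps_plus_wt_B_alt4:
  assumes "\<forall>k\<in>I. linear (hpair k)"
  shows "phi_eq_eps_plus_wt hpair I (B_alt4 hpair alpha p q)"
  using assms
  by (intro phi_eq_eps_plus_wt_tensor phi_eq_eps_plus_wt_Bcr) (simp_all add: linear_p linear_q pp qq)

lemma e_f_inverse_B_alt4: "e_f_inverse I (B_alt4 hpair alpha p q)"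
proof -
  have "ce (B_alt4 hpair alpha p q) k (((x, y), z), w) = Some (((x', y'), z'), w') \<longleftrightarrow>
      cf (B_alt4 hpair alpha p q) k (((x', y'), z'), w') = Some (((x, y), z), w)"
    for k x y z w x' y' z' w'
  proof -
    consider "k = p" | "k = q" | "k \<noteq> p" "k \<noteq> q" by blast
    then show ?thesis
      by cases (auto simp: ce_B_alt4 cf_B_alt4 B_alt4_other_index p_ne_q split: if_splits)
  qed
  then show ?thesis
    by (simp add: e_f_inverse_def)
qed

end

(* Registered only after the explicit formulas: being circular, this registration does not
   pick up lemmas added to the locale later. *)
sublocale rank2_pair \<subseteq> swapped: rank2_pair hpair alpha q p d c
  using p_ne_q linear_p linear_q pp pq qp qq by (intro rank2_pair.intro) auto

context rank2_pair
begin

lemma cwt_phi2: "cwt (B_alt4 hpair alpha q p) (phi2 c d v) = cwt (B_alt4 hpair alpha p q) v"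
proof -
  obtain x y z w where v: "v = (((x, y), z), w)" by (metis prod.exhaust)
  obtain X Y Z W where P: "phi2 c d (((x, y), z), w) = (((X, Y), Z), W)" by (metis prod.exhaust)
  show ?thesis
    using phi2_weight[OF P] by (simp add: v P cwt_B_alt4 swapped.cwt_B_alt4 add.commute)
qed

lemma cphi_phi2:
  assumes c: "(c, d) \<in> {(1, 2), (2, 1)}"
  shows "cphi (B_alt4 hpair alpha q p) k (phi2 c d v) = cphi (B_alt4 hpair alpha p q) k v"
proof -
  obtain x y z w where v: "v = (((x, y), z), w)" by (metis prod.exhaust)
  obtain X Y Z W where P: "phi2 c d (((x, y), z), w) = (((X, Y), Z), W)" by (metis prod.exhaust)
  consider "k = p" | "k = q" | "k \<noteq> p" "k \<noteq> q" by blast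
  then show ?thesis
    by cases (simp_all add: v P p_ne_q phi2_phi[OF c P] cphi_B_alt4 swapped.cphi_B_alt4
        B_alt4_other_index swapped.B_alt4_other_index)
qed

lemma ce_phi2:
  assumes c: "(c, d) \<in> {(1, 2), (2, 1)}"
  shows "ce (B_alt4 hpair alpha q p) k (phi2 c d v) =
    map_option (phi2 c d) (ce (B_alt4 hpair alpha p q) k v)"
proof -
  obtain x y z w where v: "v = (((x, y), z), w)" by (metis prod.exhaust)
  obtain X Y Z W where P: "phi2 c d (((x, y), z), w) = (((X, Y), Z), W)" by (metis prod.exhaust)
  consider "k = p" | "k = q" | "k \<noteq> p" "k \<noteq> q" by blast
  then show ?thesis
    by cases (simp_all add: v P p_ne_q phi2_e[OF c P] ce_B_alt4 swapped.ce_B_alt4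
        B_alt4_other_index swapped.B_alt4_other_index)
qed

lemma crystal_iso_phi2:
  assumes c: "(c, d) \<in> {(1, 2), (2, 1)}" and lin: "\<forall>k\<in>I. linear (hpair k)"
  shows "crystal_iso I (B_alt4 hpair alpha p q) (B_alt4 hpair alpha q p) (\<lambda>v. Some (phi2 c d v))"
proof (rule crystal_iso_of_bij[where hpair = hpair])
  have d: "(d, c) \<in> {(1, 2), (2, 1)}"
    using c by auto
  show "bij (phi2 c d)"
    by (rule o_bij[of "phi2 d c"])
      (simp_all add: fun_eq_iff phi2_involutive[OF c] phi2_involutive[OF d])
qed (simp_all add: lin phi_eq_eps_plus_wt_B_alt4 swapped.phi_eq_eps_plus_wt_B_alt4
    e_f_inverse_B_alt4 swapped.e_f_inverse_B_alt4 cwt_phi2 cphi_phi2[OF c] ce_phi2[OF c])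

end

lemma int_mult_eq_two:
  fixes a b :: int
  assumes "0 \<le> a" and "0 \<le> b" and "a * b = 2"
  shows "(a, b) \<in> {(1, 2), (2, 1)}"
proof -
  have "a dvd 2" and "b dvd 2"
    using assms(3) by (metis dvd_triv_left, metis dvd_triv_right)
  then have "a \<le> 2" and "b \<le> 2"
    by (simp_all add: zdvd_imp_le)
  then have "a \<in> {0, 1, 2}" and "b \<in> {0, 1, 2}"
    using assms(1,2) by auto
  then show ?thesis
    using assms(3) by auto
qed

lemma km_datum_product_two:
  assumes km: "km_datum I A alpha hpair" and "i \<in> I" and "j \<in> I"
    and prod: "(- A i j) * (- A j i) = 2"
  shows "i \<noteq> j" and "(- A i j, - A j i) \<in> {(1, 2), (2, 1)}"
proof -
  from km have diag: "\<forall>k\<in>I. A k k = 2"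
    and off_diag: "\<forall>k\<in>I. \<forall>l\<in>I. k \<noteq> l \<longrightarrow> A k l \<le> 0"
    unfolding km_datum_def by blast+
  show "i \<noteq> j"
    using diag prod \<open>i \<in> I\<close> by auto
  then have "A i j \<le> 0" and "A j i \<le> 0"
    using off_diag \<open>i \<in> I\<close> \<open>j \<in> I\<close> by auto
  then show "(- A i j, - A j i) \<in> {(1, 2), (2, 1)}"
    using prod by (intro int_mult_eq_two) auto
qed

lemma km_datum_rank2_pair:
  assumes km: "km_datum I A alpha hpair" and "i \<in> I" and "j \<in> I" and "i \<noteq> j"
  shows "rank2_pair hpair alpha i j (- A i j) (- A j i)"
proof -
  from km have "\<forall>k\<in>I. A k k = 2" and "\<forall>k\<in>I. linear (hpair k)"
    and "\<forall>k\<in>I. \<forall>l\<in>I. hpair k (alpha l) = of_int (A k l)"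
    unfolding km_datum_def by blast+
  then show ?thesis
    using assms(2-4) by (intro rank2_pair.intro) auto
qed

theorem proposition4p1:
  fixes I :: "'i set" and A :: "'i \<Rightarrow> 'i \<Rightarrow> int"
    and alpha :: "'i \<Rightarrow> 'w::real_vector" and hpair :: "'i \<Rightarrow> 'w \<Rightarrow> real"
    and i j :: 'i
  assumes "km_datum I A alpha hpair"
    and "i \<in> I" and "j \<in> I"
    and "(- A i j) * (- A j i) = 2"
  shows "crystal_iso I
           (tensor hpair (tensor hpair (tensor hpair (Bcr alpha i) (Bcr alpha j)) (Bcr alpha i)) (Bcr alpha j))
           (tensor hpair (tensor hpair (tensor hpair (Bcr alpha j) (Bcr alpha i)) (Bcr alpha j)) (Bcr alpha i))
           (\<lambda>b. Some (phi2 (- A i j) (- A j i) b))"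
proof -
  have lin: "\<forall>k\<in>I. linear (hpair k)"
    using assms(1) unfolding km_datum_def by blast
  have "rank2_pair hpair alpha i j (- A i j) (- A j i)"
    using km_datum_rank2_pair[OF assms(1-3) km_datum_product_two(1)[OF assms]] .
  then show ?thesis
    using rank2_pair.crystal_iso_phi2[OF _ km_datum_product_two(2)[OF assms] lin] by blast
qed

end
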